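(* Let $\mathbb{F}\in\{\mathbb{R},\mathbb{C}\}$ and let $r$ be a positive integer, with $r$ even if $\mathbb{F}=\mathbb{R}$. Let $m=2^r$ and let $\{\mathcal{B}_k\}_{k\in K}$ be a maximal collection of mutually unbiased bases for $\mathbb{F}^m$, so $|K|=k_{\mathbb{F}}(m)$. Then $$\mathcal{F}=\{P^{(k)}_{\mathcal{J}}: k\in K,\ \mathcal{J}\in\mathbb{S}_r\}$$ is a tight, maximal orthoplectic fusion frame, where $P^{(k)}_{\mathcal{J}}$ denotes the $\mathcal{J}$-coordinate projection with respect to $\mathcal{B}_k$.
   Context: Define $\{0,1\}$-matrices $S_r$ recursively: $S_1=I_2$; for $r\ge1$, $F_r=I_{2^r-1}\otimes\begin{pmatrix}0&1\\1&0\end{pmatrix}$, and $1_r$, $0_r$ are the $2^r\times1$ all-ones and all-zeros column vectors; for $r\ge2$, $S_r=\big(B_r^{(i)}\ B_r^{(ii)}\ B_r^{(iii)}\big)$ with $B_r^{(i)}=\begin{pmatrix}1_{r-1}&0_{r-1}\\0_{r-1}&1_{r-1}\end{pmatrix}$, $B_r^{(ii)}=\begin{pmatrix}S_{r-1}\\S_{r-1}\end{pmatrix}$, $B_r^{(iii)}=\begin{pmatrix}S_{r-1}\\S_{r-1}F_{r-1}\end{pmatrix}$. $S_r$ is $2^r\times(2^{r+1}-2)$, and $\mathbb{S}_r$ is the collection of blocks $\mathcal{J}_b=\{a:(S_r)_{a,b}=1\}\subset\{1,\dots,2^r\}$, one for each column $b$. Orthonormal bases $\{b_j\},\{b'_j\}$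 of $\mathbb{F}^m$ are mutually unbiased if $|\langle b_j,b'_{j'}\rangle|^2=1/m$ for all $j,j'$; a collection of pairwise mutually unbiased bases is maximal if it has $k_{\mathbb{F}}(m)$ elements, where $k_{\mathbb{R}}(m)=m/2+1$, $k_{\mathbb{C}}(m)=m+1$. The $\mathcal{J}$-coordinate projection with respect to $\{b_j\}$ is $\sum_{j\in\mathcal{J}}b_j\otimes b_j^*$. An $(n,l,m)$-fusion frame is a set $\{P_j\}_{j=1}^n$ of orthogonal projections onto $l$-dimensional subspaces of $\mathbb{F}^m$ with $A\|x\|^2\le\sum_j\|P_jx\|^2\le B\|x\|^2$ for some $0<A\le B$ and all $x$; it is tight if one can take $A=B$. Let $d_{\mathbb{F}}(m)=\frac{(m+2)(m-1)}{2}$ if $\mathbb{F}=\mathbb{R}$ and $m^2-1$ if $\mathbb{F}=\mathbb{C}$. A fusion frame is Grassmannian if it minimizes $\max_{j\ne k}\mathrm{tr}(P_jP_k)$ among all $(n,l,m)$-fusion frames; orthoplex-bound achieving if Grassmannian, $n>d_{\mathbb{F}}(m)+1$ and $\max_{j\ne k}\mathrm{tr}(P_jP_k)=l^2/m$; maximal orthoplectic if orthoplex-bound achieving with $n=2d_{\mathbb{F}}(m)$. *)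

theory Defs
  imports Complex_Main
begin

text \<open>The field F is represented as a subset of the complex numbers:
  the reals (when isreal holds) or all complex numbers.  Vectors of F^m are
  functions nat => complex with entries in F at indices below m and zero
  elsewhere (coordinates are 0-indexed); m x m matrices are functions
  nat => nat => complex.\<close>

definition fld :: "bool \<Rightarrow> complex set" where
  "fld isreal = (if isreal then \<real> else UNIV)"

definition fvec :: "complex set \<Rightarrow> nat \<Rightarrow> (nat \<Rightarrow> complex) \<Rightarrow> bool" where
  "fvec Fs m v \<longleftrightarrow> (\<forall>i<m. v i \<in> Fs) \<and> (\<forall>i\<ge>m. v i = 0)"

definition cinner :: "nat \<Rightarrow> (nat \<Rightarrow> complex) \<Rightarrow> (nat \<Rightarrow> complex) \<Rightarrow> complex" where
  "cinner m x y = (\<Sum>i<m. x i * cnj (y i))"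

definition vnorm2 :: "nat \<Rightarrow> (nat \<Rightarrow> complex) \<Rightarrow> real" where
  "vnorm2 m x = (\<Sum>i<m. (cmod (x i))\<^sup>2)"

definition mat_vec :: "nat \<Rightarrow> (nat \<Rightarrow> nat \<Rightarrow> complex) \<Rightarrow> (nat \<Rightarrow> complex) \<Rightarrow> (nat \<Rightarrow> complex)" where
  "mat_vec m P x = (\<lambda>i. if i < m then (\<Sum>i'<m. P i i' * x i') else 0)"

definition trprod :: "nat \<Rightarrow> (nat \<Rightarrow> nat \<Rightarrow> complex) \<Rightarrow> (nat \<Rightarrow> nat \<Rightarrow> complex) \<Rightarrow> real" where
  "trprod m P Q = Re (\<Sum>i<m. \<Sum>i'<m. P i i' * Q i' i)"

definition onb :: "complex set \<Rightarrow> nat \<Rightarrow> (nat \<Rightarrow> nat \<Rightarrow> complex) \<Rightarrow> bool" where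
  "onb Fs m b \<longleftrightarrow> (\<forall>j<m. fvec Fs m (b j)) \<and>
     (\<forall>j<m. \<forall>j'<m. cinner m (b j) (b j') = (if j = j' then 1 else 0))"

definition mutually_unbiased :: "nat \<Rightarrow> (nat \<Rightarrow> nat \<Rightarrow> complex) \<Rightarrow> (nat \<Rightarrow> nat \<Rightarrow> complex) \<Rightarrow> bool" where
  "mutually_unbiased m b b' \<longleftrightarrow>
     (\<forall>j<m. \<forall>j'<m. (cmod (cinner m (b j) (b' j')))\<^sup>2 = 1 / real m)"

definition kF :: "bool \<Rightarrow> nat \<Rightarrow> nat" where
  "kF isreal m = (if isreal then m div 2 + 1 else m + 1)"

definition maximal_mub :: "bool \<Rightarrow> nat \<Rightarrow> 'k set \<Rightarrow> ('k \<Rightarrow> nat \<Rightarrow> nat \<Rightarrow> complex) \<Rightarrow> bool" where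
  "maximal_mub isreal m K B \<longleftrightarrow>
     (\<forall>k\<in>K. onb (fld isreal) m (B k)) \<and>
     (\<forall>k\<in>K. \<forall>k'\<in>K. k \<noteq> k' \<longrightarrow> mutually_unbiased m (B k) (B k')) \<and>
     finite K \<and> card K = kF isreal m"

definition coord_proj :: "(nat \<Rightarrow> nat \<Rightarrow> complex) \<Rightarrow> nat set \<Rightarrow> nat \<Rightarrow> nat \<Rightarrow> complex" where
  "coord_proj b J = (\<lambda>i i'. \<Sum>j\<in>J. b j i * cnj (b j i'))"

text \<open>F_r = I_{2^r - 1} \<otimes> [[0,1],[1,0]], of size 2^(r+1) - 2.\<close>
definition Fmat :: "nat \<Rightarrow> nat \<Rightarrow> nat \<Rightarrow> nat" where
  "Fmat r t b = (if t < 2^(r+1) - 2 \<and> b < 2^(r+1) - 2 \<and> t div 2 = b div 2 \<and> t mod 2 \<noteq> b mod 2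
                 then 1 else 0)"

text \<open>Given S_{r'} (r' \<ge> 1), build S_{r'+1} = (B^(i) B^(ii) B^(iii)).
  Here h = 2^{r'} is the number of rows and c = 2^{r'+1} - 2 the number of
  columns of S_{r'}.\<close>
definition S_step :: "nat \<Rightarrow> (nat \<Rightarrow> nat \<Rightarrow> nat) \<Rightarrow> nat \<Rightarrow> nat \<Rightarrow> nat" where
  "S_step r' Sp = (\<lambda>a b.
     (let h = 2^r'; c = 2^(r'+1) - 2 in
      if a \<ge> 2 * h \<or> b \<ge> 2 + 2 * c then 0
      else if b = 0 then (if a < h then 1 else 0)
      else if b = 1 then (if a < h then 0 else 1)
      else if b < 2 + c then (if a < h then Sp a (b - 2) else Sp (a - h) (b - 2))
      else (if a < h then Sp a (b - 2 - c)
            else (\<Sum>t<c. Sp (a - h) t * Fmat r' t (b - 2 - c)))))"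

primrec Smat :: "nat \<Rightarrow> nat \<Rightarrow> nat \<Rightarrow> nat" where
  "Smat 0 = (\<lambda>a b. 0)"
| "Smat (Suc r') = (if r' = 0 then (\<lambda>a b. if a < 2 \<and> b < 2 \<and> a = b then 1 else 0)
                    else S_step r' (Smat r'))"

text \<open>Block J_b of S_r (column b, 0-indexed).\<close>
definition Sblock :: "nat \<Rightarrow> nat \<Rightarrow> nat set" where
  "Sblock r b = {a. a < 2^r \<and> Smat r a b = 1}"

definition is_proj :: "complex set \<Rightarrow> nat \<Rightarrow> nat \<Rightarrow> (nat \<Rightarrow> nat \<Rightarrow> complex) \<Rightarrow> bool" where
  "is_proj Fs m l P \<longleftrightarrow> (\<exists>u. (\<forall>s<l. fvec Fs m (u s)) \<and>
      (\<forall>s<l. \<forall>s'<l. cinner m (u s) (u s') = (if s = s' then 1 else 0)) \<and>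
      P = (\<lambda>i i'. \<Sum>s<l. u s i * cnj (u s i')))"

definition fusion_frame :: "complex set \<Rightarrow> nat \<Rightarrow> nat \<Rightarrow> 'i set \<Rightarrow> ('i \<Rightarrow> nat \<Rightarrow> nat \<Rightarrow> complex) \<Rightarrow> bool" where
  "fusion_frame Fs m l I P \<longleftrightarrow> finite I \<and> (\<forall>j\<in>I. is_proj Fs m l (P j)) \<and>
     (\<exists>A B. 0 < A \<and> A \<le> B \<and> (\<forall>x. fvec Fs m x \<longrightarrow>
        A * vnorm2 m x \<le> (\<Sum>j\<in>I. vnorm2 m (mat_vec m (P j) x)) \<and>
        (\<Sum>j\<in>I. vnorm2 m (mat_vec m (P j) x)) \<le> B * vnorm2 m x))"

definition tight_fusion_frame :: "complex set \<Rightarrow> nat \<Rightarrow> nat \<Rightarrow> 'i set \<Rightarrow> ('i \<Rightarrow> nat \<Rightarrow> nat \<Rightarrow> complex) \<Rightarrow> bool" where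
  "tight_fusion_frame Fs m l I P \<longleftrightarrow> finite I \<and> (\<forall>j\<in>I. is_proj Fs m l (P j)) \<and>
     (\<exists>A. 0 < A \<and> (\<forall>x. fvec Fs m x \<longrightarrow>
        (\<Sum>j\<in>I. vnorm2 m (mat_vec m (P j) x)) = A * vnorm2 m x))"

definition max_corr :: "nat \<Rightarrow> 'i set \<Rightarrow> ('i \<Rightarrow> nat \<Rightarrow> nat \<Rightarrow> complex) \<Rightarrow> real" where
  "max_corr m I P = Max {trprod m (P j) (P k) | j k. j \<in> I \<and> k \<in> I \<and> j \<noteq> k}"

text \<open>Grassmannian: minimal max_{j \<noteq> k} tr(P_j P_k) among all (n,l,m)-fusion frames
  (compared with all fusion frames indexed by {..<n}).\<close>
definition grassmannian :: "complex set \<Rightarrow> nat \<Rightarrow> nat \<Rightarrow> 'i set \<Rightarrow> ('i \<Rightarrow> nat \<Rightarrow> nat \<Rightarrow> complex) \<Rightarrow> bool" where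
  "grassmannian Fs m l I P \<longleftrightarrow> fusion_frame Fs m l I P \<and>
     (\<forall>Q. fusion_frame Fs m l {..<card I} Q \<longrightarrow> max_corr m I P \<le> max_corr m {..<card I} Q)"

definition dF :: "bool \<Rightarrow> nat \<Rightarrow> nat" where
  "dF isreal m = (if isreal then (m + 2) * (m - 1) div 2 else m^2 - 1)"

definition orthoplex_bound_achieving :: "bool \<Rightarrow> nat \<Rightarrow> nat \<Rightarrow> 'i set \<Rightarrow> ('i \<Rightarrow> nat \<Rightarrow> nat \<Rightarrow> complex) \<Rightarrow> bool" where
  "orthoplex_bound_achieving isreal m l I P \<longleftrightarrow> grassmannian (fld isreal) m l I P \<and>
     card I > dF isreal m + 1 \<and> max_corr m I P = real l ^ 2 / real m"

definition maximal_orthoplectic :: "bool \<Rightarrow> nat \<Rightarrow> nat \<Rightarrow> 'i set \<Rightarrow> ('i \<Rightarrow> nat \<Rightarrow> nat \<Rightarrow> complex) \<Rightarrow> bool" where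
  "maximal_orthoplectic isreal m l I P \<longleftrightarrow> orthoplex_bound_achieving isreal m l I P \<and>
     card I = 2 * dF isreal m"

end

theory Submission
  imports Defs "HOL-Library.Function_Algebras"
begin

text \<open>Within one basis the blocks of \<open>S\<^sub>r\<close> cover every coordinate exactly \<open>2\<^sup>r - 1\<close> times, so
  Parseval's identity makes the frame tight. Projections from two mutually unbiased bases have
  \<open>tr(P P') = l\<^sup>2/m\<close> (\<open>l = 2\<^sup>r\<^sup>-\<^sup>1\<close>, \<open>m = 2\<^sup>r\<close>), and within one basis the trace is the size of the
  overlap of two blocks, which is at most \<open>m/4 = l\<^sup>2/m\<close>; these block properties follow by
  induction along the recursive definition of \<open>S\<^sub>r\<close>. So the largest correlation is \<open>l\<^sup>2/m\<close>,
  and this is optimal by Rankin's orthoplex bound: more than \<open>dF + 1\<close> projections give more than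
  \<open>dF + 1\<close> traceless Hermitian matrices \<open>P - (l/m) I\<close>, which cannot be pairwise obtuse in a space of
  dimension \<open>dF\<close>. Finally \<open>kF(m) (2m - 2) = 2 dF(m)\<close>.\<close>

section \<open>Orthonormal families of coordinate vectors\<close>

lemma sum_fun_apply: "(\<Sum>x\<in>A. f x) i = (\<Sum>x\<in>A. f x i)"
  by (induction A rule: infinite_finite_induct) auto

lemma cinner_cnj_commute: "cinner m y x = cnj (cinner m x y)"
  unfolding cinner_def by (simp add: mult.commute)

lemma cinner_self: "cinner m x x = of_real (vnorm2 m x)"
  unfolding cinner_def vnorm2_def by (simp only: of_real_sum complex_norm_square)

lemma onb_orthonormal:
  "onb Fs m b \<Longrightarrow> j < m \<Longrightarrow> j' < m \<Longrightarrow> cinner m (b j) (b j') = (if j = j' then 1 else 0)"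
  unfolding onb_def by blast

lemma onb_vanishes: "onb Fs m b \<Longrightarrow> j < m \<Longrightarrow> m \<le> i \<Longrightarrow> b j i = 0"
  unfolding onb_def fvec_def by blast

lemma vnorm2_orthonormal_comb:
  assumes J: "finite J"
    and orth: "\<And>j j'. j \<in> J \<Longrightarrow> j' \<in> J \<Longrightarrow> cinner m (b j) (b j') = (if j = j' then 1 else 0)"
  shows "vnorm2 m (\<lambda>i. \<Sum>j\<in>J. c j * b j i) = (\<Sum>j\<in>J. (cmod (c j))\<^sup>2)"
proof -
  have "of_real (vnorm2 m (\<lambda>i. \<Sum>j\<in>J. c j * b j i))
      = (\<Sum>i<m. \<Sum>j\<in>J. \<Sum>j'\<in>J. c j * cnj (c j') * (b j i * cnj (b j' i)))"
    unfolding cinner_self[symmetric] cinner_def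
    by (simp only: cnj_sum complex_cnj_mult sum_product) (simp only: mult_ac)
  also have "\<dots> = (\<Sum>j\<in>J. \<Sum>j'\<in>J. c j * cnj (c j') * cinner m (b j) (b j'))"
    unfolding cinner_def sum_distrib_left
    by (subst sum.swap, rule sum.cong[OF refl], subst sum.swap, rule refl)
  also have "\<dots> = (\<Sum>j\<in>J. c j * cnj (c j))"
    using J by (simp add: orth if_distrib cong: sum.cong if_cong)
  also have "\<dots> = of_real (\<Sum>j\<in>J. (cmod (c j))\<^sup>2)"
    by (simp only: of_real_sum complex_norm_square)
  finally show ?thesis by (simp only: of_real_eq_iff)
qed

lemma mat_vec_coord_proj:
  "mat_vec m (coord_proj b J) x = (\<lambda>i. if i < m then \<Sum>j\<in>J. cinner m x (b j) * b j i else 0)"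
proof -
  have eq: "(\<Sum>i'<m. (\<Sum>j\<in>J. b j i * cnj (b j i')) * x i') = (\<Sum>j\<in>J. cinner m x (b j) * b j i)" for i
    unfolding cinner_def sum_distrib_right by (subst sum.swap) (simp only: mult_ac)
  show ?thesis
    unfolding mat_vec_def coord_proj_def eq ..
qed

lemma vnorm2_coord_proj:
  assumes "onb Fs m b" and "J \<subseteq> {..<m}"
  shows "vnorm2 m (mat_vec m (coord_proj b J) x) = (\<Sum>j\<in>J. (cmod (cinner m x (b j)))\<^sup>2)"
proof -
  have "vnorm2 m (mat_vec m (coord_proj b J) x) = vnorm2 m (\<lambda>i. \<Sum>j\<in>J. cinner m x (b j) * b j i)"
    unfolding mat_vec_coord_proj vnorm2_def by simp
  also have "\<dots> = (\<Sum>j\<in>J. (cmod (cinner m x (b j)))\<^sup>2)"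
    using assms by (intro vnorm2_orthonormal_comb)
      (auto simp: onb_orthonormal[OF assms(1)] subset_iff intro: finite_subset[OF assms(2)])
  finally show ?thesis .
qed

lemma trprod_coord_proj:
  "trprod m (coord_proj b J) (coord_proj b' J') = (\<Sum>j\<in>J. \<Sum>j'\<in>J'. (cmod (cinner m (b j) (b' j')))\<^sup>2)"
proof -
  have "(\<Sum>i<m. \<Sum>i'<m. coord_proj b J i i' * coord_proj b' J' i' i)
      = (\<Sum>i<m. \<Sum>j\<in>J. \<Sum>j'\<in>J'. \<Sum>i'<m. (b j i * cnj (b' j' i)) * (b' j' i' * cnj (b j i')))"
    unfolding coord_proj_def sum_product
    by (rule sum.cong[OF refl], subst sum.swap, rule sum.cong[OF refl], subst sum.swap) (simp only: mult_ac)
  also have "\<dots> = (\<Sum>j\<in>J. \<Sum>j'\<in>J'. \<Sum>i<m. \<Sum>i'<m. (b j i * cnj (b' j' i)) * (b' j' i' * cnj (b j i')))"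
    by (subst sum.swap, rule sum.cong[OF refl], subst sum.swap, rule refl)
  also have "\<dots> = (\<Sum>j\<in>J. \<Sum>j'\<in>J'. of_real ((cmod (cinner m (b j) (b' j')))\<^sup>2))"
    unfolding cinner_def[symmetric] sum_product[symmetric]
    by (simp only: complex_norm_square cinner_cnj_commute[of m "b' _" "b _"])
  finally show ?thesis
    unfolding trprod_def by (simp only: of_real_sum[symmetric] Re_complex_of_real)
qed

lemma is_proj_coord_proj:
  assumes b: "onb Fs m b" and J: "J \<subseteq> {..<m}"
  shows "is_proj Fs m (card J) (coord_proj b J)"
proof -
  define xs where "xs = sorted_list_of_set J"
  have fin: "finite J" using J finite_subset by blast
  have xs: "distinct xs" "set xs = J" "length xs = card J"
    using fin unfolding xs_def by auto
  have xs_less: "xs ! s < m" if "s < card J" for s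
    using J xs that nth_mem by fastforce
  show ?thesis
    unfolding is_proj_def
  proof (intro exI[of _ "\<lambda>s. b (xs ! s)"] conjI allI impI ext)
    fix s assume "s < card J"
    then show "fvec Fs m (b (xs ! s))" using b xs_less unfolding onb_def by blast
  next
    fix s s' assume "s < card J" "s' < card J"
    then show "cinner m (b (xs ! s)) (b (xs ! s')) = (if s = s' then 1 else 0)"
      using onb_orthonormal[OF b] xs_less xs by (simp add: nth_eq_iff_index_eq)
  next
    fix i i'
    have "bij_betw ((!) xs) {..<card J} J"
      using bij_betw_nth[OF xs(1)] xs by auto
    then show "coord_proj b J i i' = (\<Sum>s<card J. b (xs ! s) i * cnj (b (xs ! s) i'))"
      unfolding coord_proj_def by (rule sum.reindex_bij_betw[symmetric])
  qed
qed

lemma orthogonal_family_independent: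
  fixes scale :: "'a::field \<Rightarrow> 'b::ab_group_add \<Rightarrow> 'b" and G :: "'b \<Rightarrow> 'b \<Rightarrow> 'a"
  assumes vs: "vector_space scale"
    and G_add: "\<And>x y z. G (x + y) z = G x z + G y z"
    and G_scale: "\<And>c x z. G (scale c x) z = c * G x z"
    and orth: "\<And>x y. x \<in> S \<Longrightarrow> y \<in> S \<Longrightarrow> x \<noteq> y \<Longrightarrow> G x y = 0"
    and nonzero: "\<And>x. x \<in> S \<Longrightarrow> G x x \<noteq> 0"
  shows "\<not> module.dependent scale S"
proof
  interpret vector_space scale by (rule vs)
  have G_zero: "G 0 z = 0" for z using G_scale[of 0 0 z] by simp
  have G_sum: "G (\<Sum>x\<in>t. f x) z = (\<Sum>x\<in>t. G (f x) z)" for t :: "'b set" and f z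
    by (induction t rule: infinite_finite_induct) (auto simp: G_zero G_add)
  assume "dependent S"
  then obtain t u y where t: "finite t" "t \<subseteq> S" "(\<Sum>x\<in>t. scale (u x) x) = 0"
    and y: "y \<in> t" "u y \<noteq> 0"
    unfolding dependent_explicit by blast
  have "0 = G (\<Sum>x\<in>t. scale (u x) x) y" using t G_zero by simp
  also have "\<dots> = (\<Sum>x\<in>t. u x * G x y)" by (simp add: G_sum G_scale)
  also have "\<dots> = u y * G y y"
    using t y orth by (subst sum.remove[OF t(1) y(1)]) (auto intro!: sum.neutral; blast)
  finally show False using y nonzero t by auto
qed

definition vec_scale :: "complex \<Rightarrow> (nat \<Rightarrow> complex) \<Rightarrow> (nat \<Rightarrow> complex)" where
  "vec_scale c v = (\<lambda>i. c * v i)"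

interpretation vec: vector_space vec_scale
  by unfold_locales (auto simp: vec_scale_def ring_distribs fun_eq_iff)

lemma cinner_add_left: "cinner m (x + y) z = cinner m x z + cinner m y z"
  unfolding cinner_def by (simp add: ring_distribs sum.distrib)

lemma cinner_scale_left: "cinner m (vec_scale c x) z = c * cinner m x z"
  unfolding cinner_def vec_scale_def by (simp add: sum_distrib_left mult_ac)

lemma vanishing_in_span_unit_vectors:
  assumes "\<forall>i\<ge>m. v i = 0"
  shows "v \<in> vec.span ((\<lambda>i k. if k = i then 1 else 0) ` {..<m})"
proof -
  have "v = (\<Sum>i<m. vec_scale (v i) (\<lambda>k. if k = i then 1 else 0))"
    using assms by (auto simp: sum_fun_apply vec_scale_def fun_eq_iff not_less if_distrib cong: if_cong)
  also have "\<dots> \<in> vec.span ((\<lambda>i k. if k = i then 1 else 0) ` {..<m})"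
    by (intro vec.span_sum vec.span_scale vec.span_base) auto
  finally show ?thesis .
qed

text \<open>Otherwise \<open>y\<close> together with the \<open>b\<^sub>j\<close> would be \<open>m + 1\<close> independent vectors in the span
  of \<open>m\<close> unit vectors.\<close>
lemma orthogonal_to_onb_eq_0:
  assumes b: "onb Fs m b" and y_vanishes: "\<forall>i\<ge>m. y i = 0"
    and y_orth: "\<And>k. k < m \<Longrightarrow> cinner m y (b k) = 0"
  shows "y = 0"
proof (rule ccontr)
  assume "y \<noteq> 0"
  then obtain i0 where "y i0 \<noteq> 0" by (auto simp: fun_eq_iff)
  with y_vanishes have "i0 < m" "y i0 \<noteq> 0" by (metis not_le)+
  then have "vnorm2 m y > 0"
    unfolding vnorm2_def by (intro sum_pos2[of _ i0]) auto
  then have y_nonzero: "cinner m y y \<noteq> 0" by (simp add: cinner_self)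
  define S where "S = insert y (b ` {..<m})"
  define E where "E = (\<lambda>i k. if k = i then (1::complex) else 0) ` {..<m}"
  have inj: "inj_on b {..<m}"
    by (rule inj_onI) (metis lessThan_iff one_neq_zero onb_orthonormal[OF b])
  have "y \<notin> b ` {..<m}"
    using y_orth y_nonzero by force
  then have "card S = m + 1"
    unfolding S_def using card_image[OF inj] by simp
  have "\<not> vec.dependent S"
  proof (rule orthogonal_family_independent[OF vec.vector_space_axioms, of "cinner m"])
    fix u w assume "u \<in> S" "w \<in> S" "u \<noteq> w"
    then show "cinner m u w = 0"
      unfolding S_def using onb_orthonormal[OF b] y_orth
      by (auto simp: cinner_cnj_commute[of m _ y])
  next
    fix u assume "u \<in> S"
    then show "cinner m u u \<noteq> 0"
      unfolding S_def using onb_orthonormal[OF b] y_nonzero by auto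
  qed (simp_all add: cinner_add_left cinner_scale_left)
  moreover have "S \<subseteq> vec.span E"
    unfolding S_def E_def using vanishing_in_span_unit_vectors y_vanishes onb_vanishes[OF b]
    by (auto simp: not_less)
  ultimately have "card S \<le> card E"
    using vec.independent_span_bound[of E S] unfolding E_def by auto
  also have "card E \<le> m"
    unfolding E_def using card_image_le[of "{..<m}"] by auto
  finally show False using \<open>card S = m + 1\<close> by simp
qed

lemma onb_parseval:
  assumes b: "onb Fs m b" and x: "\<forall>i\<ge>m. x i = 0"
  shows "(\<Sum>j<m. (cmod (cinner m x (b j)))\<^sup>2) = vnorm2 m x"
proof -
  define c where "c j = cinner m x (b j)" for j
  define y where "y = (\<lambda>i. x i - (\<Sum>j<m. c j * b j i))"
  have "cinner m y (b k) = 0" if k: "k < m" for k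
  proof -
    have "(\<Sum>i<m. (\<Sum>j<m. c j * b j i) * cnj (b k i)) = (\<Sum>j<m. c j * cinner m (b j) (b k))"
      unfolding cinner_def sum_distrib_left sum_distrib_right by (subst sum.swap) (simp only: mult_ac)
    then have "cinner m y (b k) = c k - (\<Sum>j<m. c j * cinner m (b j) (b k))"
      unfolding y_def c_def by (simp add: cinner_def left_diff_distrib sum_subtractf)
    also have "(\<Sum>j<m. c j * cinner m (b j) (b k)) = (\<Sum>j<m. if j = k then c j else 0)"
      using k by (intro sum.cong refl) (simp add: onb_orthonormal[OF b])
    finally show ?thesis using k by simp
  qed
  moreover have "\<forall>i\<ge>m. y i = 0"
    unfolding y_def using x onb_vanishes[OF b] by simp
  ultimately have "y = 0"
    using orthogonal_to_onb_eq_0[OF b] by blast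
  then have "x i = (\<Sum>j<m. c j * b j i)" if "i < m" for i
    using fun_cong[of y 0 i] unfolding y_def by simp
  then have "vnorm2 m x = vnorm2 m (\<lambda>i. \<Sum>j<m. c j * b j i)"
    unfolding vnorm2_def by simp
  also have "\<dots> = (\<Sum>j<m. (cmod (c j))\<^sup>2)"
    by (rule vnorm2_orthonormal_comb) (auto simp: onb_orthonormal[OF b])
  finally show ?thesis unfolding c_def by simp
qed

section \<open>The orthoplex bound\<close>

locale psd_form = vector_space scale
  for scale :: "real \<Rightarrow> 'a::ab_group_add \<Rightarrow> 'a" +
  fixes F :: "'a \<Rightarrow> 'a \<Rightarrow> real"
  assumes F_add_left: "F (x + y) z = F x z + F y z"
    and F_scale_left: "F (scale c x) z = c * F x z"
    and F_commute: "F x y = F y x"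
    and F_self_nonneg: "0 \<le> F x x"
    and F_self_eq_0: "F x x = 0 \<Longrightarrow> F x y = 0"
begin

lemma F_zero_left: "F 0 z = 0"
  using F_add_left[of 0 0 z] by simp

lemma F_add_right: "F z (x + y) = F z x + F z y"
  by (simp only: F_commute[of z] F_add_left)

lemma F_scale_right: "F z (scale c x) = c * F z x"
  by (simp only: F_commute[of z] F_scale_left)

lemma F_sum_left: "F (\<Sum>x\<in>A. f x) z = (\<Sum>x\<in>A. F (f x) z)"
  by (induction A rule: infinite_finite_induct) (auto simp: F_zero_left F_add_left)

lemma positive_part_pairing_nonpos:
  assumes t: "finite t" "t \<subseteq> insert u V"
    and comb: "(\<Sum>x\<in>t. scale (d x) x) = 0"
    and obtuse: "\<And>x y. x \<in> V \<Longrightarrow> y \<in> V \<Longrightarrow> x \<noteq> y \<Longrightarrow> F x y < 0"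
    and orth: "\<And>x. x \<in> V \<Longrightarrow> F x u = 0"
    and P: "P = {x\<in>t. x \<noteq> u \<and> 0 < d x}" and p: "p \<in> P"
  shows "F (\<Sum>x\<in>P. scale (d x) x) p \<le> 0"
proof -
  have "P \<subseteq> t" "finite P" "p \<in> V" using t p unfolding P by auto
  have "(\<Sum>x\<in>t - P. d x * F x p) + F (\<Sum>x\<in>P. scale (d x) x) p = F (\<Sum>x\<in>t. scale (d x) x) p"
    unfolding sum.subset_diff[OF \<open>P \<subseteq> t\<close> t(1)] by (simp add: F_add_left F_sum_left F_scale_left)
  also have "\<dots> = 0"
    using comb by (simp add: F_zero_left)
  finally have "F (\<Sum>x\<in>P. scale (d x) x) p = - (\<Sum>x\<in>t - P. d x * F x p)"
    by linarith
  moreover have "0 \<le> (\<Sum>y\<in>t - P. d y * F y p)"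
  proof (intro sum_nonneg)
    fix y assume y: "y \<in> t - P"
    show "0 \<le> d y * F y p"
    proof (cases "y = u")
      case True
      then show ?thesis using orth[OF \<open>p \<in> V\<close>] F_commute[of u p] by simp
    next
      case False
      then have "y \<in> V" "d y \<le> 0" "y \<noteq> p" using y t p unfolding P by auto
      then show ?thesis
        using obtuse[of y p] \<open>p \<in> V\<close> by (simp add: mult_nonpos_nonpos less_imp_le)
    qed
  qed
  ultimately show ?thesis by simp
qed

text \<open>In a vanishing combination of pairwise obtuse vectors and a vector \<open>u\<close> orthogonal to them,
  the part \<open>w\<close> with positive coefficients satisfies \<open>F w w \<le> 0\<close>; so \<open>w\<close> is \<open>F\<close>-null, which
  pairing with the extra obtuse vector \<open>z\<close> rules out unless that part is empty.\<close>
lemma obtuse_combination_nonpos: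
  assumes t: "finite t" "t \<subseteq> insert u V"
    and comb: "(\<Sum>x\<in>t. scale (d x) x) = 0"
    and obtuse: "\<And>x y. x \<in> V \<Longrightarrow> y \<in> V \<Longrightarrow> x \<noteq> y \<Longrightarrow> F x y < 0"
    and orth: "\<And>x. x \<in> V \<Longrightarrow> F x u = 0"
    and z: "\<And>x. x \<in> V \<Longrightarrow> F x z < 0"
    and x: "x \<in> t" "x \<noteq> u"
  shows "d x \<le> 0"
proof (rule ccontr)
  define P where "P = {x\<in>t. x \<noteq> u \<and> 0 < d x}"
  define w where "w = (\<Sum>x\<in>P. scale (d x) x)"
  assume "\<not> d x \<le> 0"
  then have "x \<in> P" using x unfolding P_def by auto
  have P: "finite P" "P \<subseteq> V" using t unfolding P_def by auto
  have F_w: "F w y = (\<Sum>p\<in>P. d p * F p y)" for y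
    unfolding w_def by (simp add: F_sum_left F_scale_left)
  have "F w w = (\<Sum>p\<in>P. d p * F p w)"
    by (rule F_w)
  also have "\<dots> = (\<Sum>p\<in>P. d p * F w p)"
    by (simp add: F_commute[of _ w])
  also have "\<dots> \<le> 0"
    using positive_part_pairing_nonpos[OF t comb obtuse orth P_def] unfolding w_def[symmetric]
    by (intro sum_nonpos mult_nonneg_nonpos) (auto simp: P_def)
  finally have "F w z = 0" using F_self_nonneg[of w] F_self_eq_0[of w z] by linarith
  moreover have "(\<Sum>p\<in>P. - (d p * F p z)) > 0"
    using P \<open>x \<in> P\<close> z by (intro sum_pos) (auto simp: P_def mult_pos_neg)
  ultimately show False by (simp add: F_w sum_negf)
qed

text \<open>If \<open>N > card T\<close>, then \<open>u, v\<^sub>0, \<dots>, v\<^sub>N\<^sub>-\<^sub>2\<close> are dependent; the previous lemma with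
  \<open>z = v\<^sub>N\<^sub>-\<^sub>1\<close>, applied to the combination and to its negative, makes it trivial.\<close>
lemma obtuse_family_card_le:
  assumes T: "finite T" and v_span: "\<And>j. j < N \<Longrightarrow> v j \<in> span T" and u_span: "u \<in> span T"
    and orth: "\<And>j. j < N \<Longrightarrow> F (v j) u = 0" and u: "0 < F u u"
    and obtuse: "\<And>j k. j < N \<Longrightarrow> k < N \<Longrightarrow> j \<noteq> k \<Longrightarrow> F (v j) (v k) < 0"
  shows "N \<le> card T"
proof (rule ccontr)
  assume "\<not> N \<le> card T"
  define L where "L = N - 1"
  define V where "V = v ` {..<L}"
  have L: "L < N" "card T \<le> L" "N = Suc L" using \<open>\<not> N \<le> card T\<close> unfolding L_def by auto
  have "inj_on v {..<N}"
  proof (rule inj_onI)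
    fix j k assume "j \<in> {..<N}" "k \<in> {..<N}" "v j = v k"
    then show "j = k" using obtuse[of j k] F_self_nonneg[of "v j"] by force
  qed
  then have "card V = L"
    unfolding V_def using L by (subst card_image) (auto intro: inj_on_subset)
  moreover have "u \<notin> V" using orth u L unfolding V_def by force
  ultimately have "card (insert u V) = N"
    using L unfolding V_def by simp
  moreover have "insert u V \<subseteq> span T"
    using u_span v_span L unfolding V_def by auto
  ultimately have "dependent (insert u V)"
    using independent_span_bound[OF T] L by fastforce
  then obtain t d y where t: "finite t" "t \<subseteq> insert u V" "(\<Sum>x\<in>t. scale (d x) x) = 0"
    and y: "y \<in> t" "d y \<noteq> 0"
    unfolding dependent_explicit by blast
  have V_obtuse: "\<And>x y. x \<in> V \<Longrightarrow> y \<in> V \<Longrightarrow> x \<noteq> y \<Longrightarrow> F x y < 0"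
    using L unfolding V_def by (force intro: obtuse)
  have V_orth: "\<And>x. x \<in> V \<Longrightarrow> F x u = 0"
    and V_last: "\<And>x. x \<in> V \<Longrightarrow> F x (v L) < 0"
    using obtuse orth L unfolding V_def by auto
  have "(\<Sum>x\<in>t. scale (- d x) x) = 0"
    using t(3) by (simp add: scale_minus_left sum_negf)
  then have "d x = 0" if "x \<in> t" "x \<noteq> u" for x
    using obtuse_combination_nonpos[OF t(1,2) _ V_obtuse V_orth V_last that, of d]
      obtuse_combination_nonpos[OF t(1,2) _ V_obtuse V_orth V_last that, of "\<lambda>x. - d x"] t(3)
    by simp
  then have "y = u" using y by blast
  have "(\<Sum>x\<in>t. scale (d x) x) = (\<Sum>x\<in>t. if x = u then scale (d u) u else 0)"
    using \<open>\<And>x. x \<in> t \<Longrightarrow> x \<noteq> u \<Longrightarrow> d x = 0\<close> by (intro sum.cong) auto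
  also have "\<dots> = scale (d u) u"
    using y t(1) \<open>y = u\<close> by simp
  finally show False using t(3) y \<open>y = u\<close> u F_zero_left by simp
qed

end

definition mat_scale :: "real \<Rightarrow> (nat \<Rightarrow> nat \<Rightarrow> complex) \<Rightarrow> (nat \<Rightarrow> nat \<Rightarrow> complex)" where
  "mat_scale c X = (\<lambda>i i'. of_real c * X i i')"

interpretation mat: vector_space mat_scale
  by unfold_locales (auto simp: mat_scale_def ring_distribs fun_eq_iff)

definition hs_inner :: "nat \<Rightarrow> (nat \<Rightarrow> nat \<Rightarrow> complex) \<Rightarrow> (nat \<Rightarrow> nat \<Rightarrow> complex) \<Rightarrow> real" where
  "hs_inner m X Y = Re (\<Sum>i<m. \<Sum>i'<m. X i i' * cnj (Y i i'))"

lemma hs_inner_self: "hs_inner m X X = (\<Sum>i<m. \<Sum>i'<m. (cmod (X i i'))\<^sup>2)"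
  unfolding hs_inner_def by (simp only: complex_norm_square[symmetric] of_real_sum[symmetric] Re_complex_of_real)

lemma psd_form_hs_inner: "psd_form mat_scale (hs_inner m)"
proof (unfold_locales)
  fix X Y Z :: "nat \<Rightarrow> nat \<Rightarrow> complex" and c :: real
  show "hs_inner m (X + Y) Z = hs_inner m X Z + hs_inner m Y Z"
    unfolding hs_inner_def by (simp add: ring_distribs sum.distrib)
  show "hs_inner m (mat_scale c X) Z = c * hs_inner m X Z"
    unfolding hs_inner_def mat_scale_def by (simp add: sum_distrib_left mult_ac)
  have "(\<Sum>i<m. \<Sum>i'<m. Y i i' * cnj (X i i')) = cnj (\<Sum>i<m. \<Sum>i'<m. X i i' * cnj (Y i i'))"
    by (simp add: cnj_sum mult.commute)
  then show "hs_inner m X Y = hs_inner m Y X"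
    unfolding hs_inner_def by simp
  show "0 \<le> hs_inner m X X"
    unfolding hs_inner_self by (intro sum_nonneg) auto
  assume "hs_inner m X X = 0"
  then have "\<forall>i<m. \<forall>i'<m. X i i' = 0"
    unfolding hs_inner_self by (simp add: sum_nonneg_eq_0_iff sum_nonneg)
  then show "hs_inner m X Y = 0"
    unfolding hs_inner_def by simp
qed

definition upper_pairs :: "nat \<Rightarrow> (nat \<times> nat) set" where
  "upper_pairs m = {(a, b). a \<le> b \<and> b < m}"

definition strict_upper_pairs :: "nat \<Rightarrow> (nat \<times> nat) set" where
  "strict_upper_pairs m = {(a, b). a < b \<and> b < m}"

lemma finite_upper_pairs: "finite (upper_pairs m)"
  by (rule finite_subset[of _ "{..<m} \<times> {..<m}"]) (auto simp: upper_pairs_def)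

lemma finite_strict_upper_pairs: "finite (strict_upper_pairs m)"
  by (rule finite_subset[of _ "{..<m} \<times> {..<m}"]) (auto simp: strict_upper_pairs_def)

lemma card_upper_pairs: "2 * card (upper_pairs m) = m * (m + 1)"
proof (induction m)
  case (Suc m)
  have "upper_pairs (Suc m) = upper_pairs m \<union> (\<lambda>a. (a, m)) ` {..m}"
    by (auto simp: upper_pairs_def)
  moreover have "card ((\<lambda>a. (a, m)) ` {..m}) = m + 1"
    by (subst card_image) (auto simp: inj_on_def)
  moreover have "card (upper_pairs m \<union> (\<lambda>a. (a, m)) ` {..m})
      = card (upper_pairs m) + card ((\<lambda>a. (a, m)) ` {..m})"
    by (rule card_Un_disjoint) (use finite_upper_pairs in \<open>auto simp: upper_pairs_def\<close>)
  ultimately show ?case using Suc by simp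
qed (simp add: upper_pairs_def)

lemma card_strict_upper_pairs: "card (strict_upper_pairs m) + m = card (upper_pairs m)"
proof -
  have "upper_pairs m = strict_upper_pairs m \<union> (\<lambda>a. (a, a)) ` {..<m}"
    by (auto simp: upper_pairs_def strict_upper_pairs_def)
  moreover have "card ((\<lambda>a. (a, a)) ` {..<m}) = m"
    by (subst card_image) (auto simp: inj_on_def)
  moreover have "card (strict_upper_pairs m \<union> (\<lambda>a. (a, a)) ` {..<m})
      = card (strict_upper_pairs m) + card ((\<lambda>a. (a, a)) ` {..<m})"
    by (rule card_Un_disjoint) (use finite_strict_upper_pairs in \<open>auto simp: strict_upper_pairs_def\<close>)
  ultimately show ?thesis by simp
qed

definition sym_unit :: "nat \<times> nat \<Rightarrow> nat \<Rightarrow> nat \<Rightarrow> complex" where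
  "sym_unit p = (\<lambda>i i'. if (i, i') = p \<or> (i', i) = p then 1 else 0)"

definition skew_unit :: "nat \<times> nat \<Rightarrow> nat \<Rightarrow> nat \<Rightarrow> complex" where
  "skew_unit p = (\<lambda>i i'. if (i, i') = p then \<i> else if (i', i) = p then - \<i> else 0)"

text \<open>A spanning set of the real space of Hermitian \<open>m \<times> m\<close> matrices over \<open>\<real>\<close> or \<open>\<complex>\<close>, whose
  dimension is \<open>dF isreal m + 1\<close>.\<close>
definition herm_basis :: "bool \<Rightarrow> nat \<Rightarrow> (nat \<Rightarrow> nat \<Rightarrow> complex) set" where
  "herm_basis isreal m =
     sym_unit ` upper_pairs m \<union> (if isreal then {} else skew_unit ` strict_upper_pairs m)"

lemma card_herm_basis_le:
  assumes "0 < m"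
  shows "card (herm_basis isreal m) \<le> dF isreal m + 1"
proof -
  have "card (herm_basis isreal m)
      \<le> card (upper_pairs m) + (if isreal then 0 else card (strict_upper_pairs m))"
    unfolding herm_basis_def
    by (rule order_trans[OF card_Un_le], intro add_mono card_image_le finite_upper_pairs)
      (auto intro: card_image_le finite_strict_upper_pairs)
  moreover have "2 * (dF isreal m + 1) = (if isreal then m * (m + 1) else 2 * m * m)"
    using assms by (cases m) (auto simp: dF_def power2_eq_square algebra_simps)
  ultimately show ?thesis
    using card_upper_pairs[of m] card_strict_upper_pairs[of m] by (auto split: if_splits)
qed

lemma sum_sym_units_apply:
  "(\<Sum>p\<in>upper_pairs m. mat_scale (f p) (sym_unit p)) i i'
     = (if i < m \<and> i' < m then of_real (f (min i i', max i i')) else 0)"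
proof -
  have "(\<Sum>p\<in>upper_pairs m. mat_scale (f p) (sym_unit p)) i i'
      = (\<Sum>p\<in>upper_pairs m. if (min i i', max i i') = p then of_real (f p) else 0)"
    unfolding sum_fun_apply mat_scale_def sym_unit_def
    by (intro sum.cong refl) (auto simp: upper_pairs_def min_def max_def)
  then show ?thesis
    using finite_upper_pairs by (simp add: upper_pairs_def)
qed

lemma sum_skew_units_apply:
  "(\<Sum>p\<in>strict_upper_pairs m. mat_scale (g p) (skew_unit p)) i i'
     = (if (i, i') \<in> strict_upper_pairs m then \<i> * of_real (g (i, i')) else 0)
       + (if (i', i) \<in> strict_upper_pairs m then - \<i> * of_real (g (i', i)) else 0)"
proof -
  have "(\<Sum>p\<in>strict_upper_pairs m. mat_scale (g p) (skew_unit p)) i i'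
      = (\<Sum>p\<in>strict_upper_pairs m. (if (i, i') = p then \<i> * of_real (g p) else 0)
                                   + (if (i', i) = p then - \<i> * of_real (g p) else 0))"
    unfolding sum_fun_apply mat_scale_def skew_unit_def
    by (intro sum.cong refl) (auto simp: strict_upper_pairs_def)
  then show ?thesis
    using finite_strict_upper_pairs by (simp add: sum.distrib)
qed

lemma hermitian_in_span_herm_basis:
  assumes vanish: "\<And>i i'. m \<le> i \<or> m \<le> i' \<Longrightarrow> X i i' = 0"
    and herm: "\<And>i i'. X i' i = cnj (X i i')"
    and real: "isreal \<Longrightarrow> \<forall>i i'. Im (X i i') = 0"
  shows "X \<in> mat.span (herm_basis isreal m)"
proof -
  define A where "A = (\<Sum>p\<in>upper_pairs m. mat_scale (Re (X (fst p) (snd p))) (sym_unit p))"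
  define B where "B = (\<Sum>p\<in>strict_upper_pairs m. mat_scale (Im (X (fst p) (snd p))) (skew_unit p))"
  have "X i i' = A i i' + B i i'" for i i'
  proof -
    have AB: "A i i' + B i i'
      = (if i < m \<and> i' < m then of_real (Re (X (min i i') (max i i'))) else 0)
        + (if (i, i') \<in> strict_upper_pairs m then \<i> * of_real (Im (X i i')) else 0)
        + (if (i', i) \<in> strict_upper_pairs m then - \<i> * of_real (Im (X i' i)) else 0)"
      unfolding A_def B_def sum_sym_units_apply sum_skew_units_apply by simp
    consider "m \<le> i \<or> m \<le> i'" | "i < i'" "i' < m" | "i' < i" "i < m" | "i = i'" "i < m"
      by linarith
    then show ?thesis
    proof cases
      case 1
      then show ?thesis unfolding AB using vanish[of i i'] by (auto simp: strict_upper_pairs_def)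
    next
      case 3
      then show ?thesis unfolding AB using herm[of i' i] by (simp add: strict_upper_pairs_def complex_eq_iff)
    next
      case 4
      then show ?thesis unfolding AB using herm[of i i] by (simp add: strict_upper_pairs_def complex_eq_iff)
    qed (unfold AB, simp add: strict_upper_pairs_def complex_eq_iff)
  qed
  then have "X = A + B" by (simp add: fun_eq_iff)
  moreover have "A \<in> mat.span (herm_basis isreal m)"
    unfolding A_def herm_basis_def by (intro mat.span_sum mat.span_scale mat.span_base) auto
  moreover have "B \<in> mat.span (herm_basis isreal m)"
  proof (cases isreal)
    case True
    then have "B = 0"
      using real unfolding B_def by (intro sum.neutral) (simp add: mat_scale_def fun_eq_iff)
    then show ?thesis by (simp add: mat.span_zero)
  next
    case False
    then show ?thesis
      unfolding B_def herm_basis_def by (intro mat.span_sum mat.span_scale mat.span_base) auto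
  qed
  ultimately show ?thesis by (simp add: mat.span_add)
qed

lemma is_proj_vanishes: "is_proj Fs m l P \<Longrightarrow> m \<le> i \<or> m \<le> i' \<Longrightarrow> P i i' = 0"
  unfolding is_proj_def fvec_def by auto

lemma is_proj_hermitian: "is_proj Fs m l P \<Longrightarrow> P i' i = cnj (P i i')"
  unfolding is_proj_def by (auto simp: cnj_sum mult.commute)

lemma is_proj_real:
  assumes "is_proj Fs m l P" and "Fs \<subseteq> \<real>"
  shows "Im (P i i') = 0"
proof -
  obtain u where u: "\<forall>s<l. fvec Fs m (u s)" and P: "P = (\<lambda>i i'. \<Sum>s<l. u s i * cnj (u s i'))"
    using assms(1) unfolding is_proj_def by blast
  have "u s i \<in> \<real>" if "s < l" for s i
    using u that assms(2) unfolding fvec_def by (cases "i < m") auto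
  then have "P i i' \<in> \<real>"
    unfolding P by (auto intro!: sum_in_Reals Reals_mult simp: Reals_cnj_iff)
  then show ?thesis by (simp add: complex_is_Real_iff)
qed

lemma is_proj_trace:
  assumes "is_proj Fs m l P"
  shows "(\<Sum>i<m. P i i) = of_nat l"
proof -
  obtain u where u: "\<forall>s<l. \<forall>s'<l. cinner m (u s) (u s') = (if s = s' then 1 else 0)"
    and P: "P = (\<lambda>i i'. \<Sum>s<l. u s i * cnj (u s i'))"
    using assms unfolding is_proj_def by blast
  have "(\<Sum>i<m. P i i) = (\<Sum>s<l. cinner m (u s) (u s))"
    unfolding P cinner_def by (rule sum.swap)
  then show ?thesis using u by simp
qed

definition identity_mat :: "nat \<Rightarrow> nat \<Rightarrow> nat \<Rightarrow> complex" where
  "identity_mat m = (\<lambda>i i'. if i = i' \<and> i < m then 1 else 0)"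

lemma hs_inner_identity_mat: "hs_inner m X (identity_mat m) = Re (\<Sum>i<m. X i i)"
  unfolding hs_inner_def identity_mat_def by (simp add: if_distrib cong: if_cong)

lemma hs_inner_is_proj:
  assumes "is_proj Fs m l Q"
  shows "hs_inner m P Q = trprod m P Q"
proof -
  have "cnj (Q i i') = Q i' i" for i i'
    using is_proj_hermitian[OF assms, of i' i] by simp
  then show ?thesis
    unfolding hs_inner_def trprod_def by presburger
qed

lemma finite_herm_basis: "finite (herm_basis isreal m)"
  unfolding herm_basis_def using finite_upper_pairs finite_strict_upper_pairs by auto

lemma is_proj_in_span_herm_basis:
  assumes "is_proj (fld isreal) m l P"
  shows "P \<in> mat.span (herm_basis isreal m)"
proof (rule hermitian_in_span_herm_basis)
  show "P i i' = 0" if "m \<le> i \<or> m \<le> i'" for i i' using is_proj_vanishes[OF assms that] .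
  show "P i' i = cnj (P i i')" for i i' using is_proj_hermitian[OF assms] .
  show "isreal \<Longrightarrow> \<forall>i i'. Im (P i i') = 0" using is_proj_real[OF assms] by (simp add: fld_def)
qed

lemma identity_mat_in_span_herm_basis: "identity_mat m \<in> mat.span (herm_basis isreal m)"
  by (rule hermitian_in_span_herm_basis) (auto simp: identity_mat_def)

text \<open>The matrices \<open>P\<^sub>j - (l/m) I\<close> are pairwise obtuse if every \<open>tr(P\<^sub>j P\<^sub>k) < l\<^sup>2/m\<close>, and they lie
  in the orthogonal complement of \<open>I\<close> inside the Hermitian matrices.\<close>
theorem orthoplex_bound:
  assumes m: "0 < m" and n: "dF isreal m + 1 < n"
    and Q: "\<And>j. j < n \<Longrightarrow> is_proj (fld isreal) m l (Q j)"
  shows "\<exists>j<n. \<exists>k<n. j \<noteq> k \<and> real l ^ 2 / real m \<le> trprod m (Q j) (Q k)"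
proof (rule ccontr)
  interpret psd_form mat_scale "hs_inner m" by (rule psd_form_hs_inner)
  assume "\<not> ?thesis"
  then have small: "trprod m (Q j) (Q k) < real l ^ 2 / real m" if "j < n" "k < n" "j \<noteq> k" for j k
    using that by (meson not_le)
  define c where "c = real l / real m"
  define X where "X j = Q j + mat_scale (- c) (identity_mat m)" for j
  have tr_Q: "hs_inner m (Q j) (identity_mat m) = real l" if "j < n" for j
    using is_proj_trace[OF Q[OF that]] by (simp add: hs_inner_identity_mat)
  have tr_I: "hs_inner m (identity_mat m) (identity_mat m) = real m"
    unfolding hs_inner_identity_mat by (simp add: identity_mat_def)
  have X_X: "hs_inner m (X j) (X k) = trprod m (Q j) (Q k) - real l ^ 2 / real m"
    if "j < n" "k < n" for j k
  proof -
    have "hs_inner m (X j) (X k) = hs_inner m (Q j) (Q k) - 2 * c * real l + c\<^sup>2 * real m"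
      unfolding X_def F_add_left F_add_right F_scale_left F_scale_right
      using tr_Q[OF that(1)] tr_Q[OF that(2)] tr_I F_commute[of "identity_mat m" "Q k"]
      by (simp add: power2_eq_square algebra_simps)
    also have "\<dots> = trprod m (Q j) (Q k) - real l ^ 2 / real m"
      using m hs_inner_is_proj[OF Q[OF that(2)]] unfolding c_def
      by (simp add: field_simps power2_eq_square)
    finally show ?thesis .
  qed
  have X_I: "hs_inner m (X j) (identity_mat m) = 0" if "j < n" for j
    using that m unfolding X_def F_add_left F_scale_left by (simp add: tr_Q tr_I c_def)
  have "n \<le> card (herm_basis isreal m)"
  proof (rule obtuse_family_card_le[where v = X and u = "identity_mat m"])
    show "X j \<in> mat.span (herm_basis isreal m)" if "j < n" for j
      unfolding X_def using is_proj_in_span_herm_basis[OF Q[OF that]] identity_mat_in_span_herm_basis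
      by (intro mat.span_add mat.span_scale)
    show "j < n \<Longrightarrow> hs_inner m (X j) (identity_mat m) = 0" for j by (rule X_I)
    show "0 < hs_inner m (identity_mat m) (identity_mat m)" using tr_I m by simp
    show "hs_inner m (X j) (X k) < 0" if "j < n" "k < n" "j \<noteq> k" for j k
      using X_X[OF that(1,2)] small[OF that] by simp
  qed (simp_all add: finite_herm_basis identity_mat_in_span_herm_basis)
  then show False using card_herm_basis_le[OF m, of isreal] n by simp
qed

section \<open>The blocks of \<open>S\<^sub>r\<close>\<close>

text \<open>\<open>F\<^sub>r\<close> swaps the columns \<open>2i\<close> and \<open>2i + 1\<close>.\<close>
definition partner :: "nat \<Rightarrow> nat" where
  "partner b = (if even b then b + 1 else b - 1)"

lemma partner_partner [simp]: "partner (partner b) = b"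
  unfolding partner_def by auto

lemma partner_less: "even c \<Longrightarrow> b < c \<Longrightarrow> partner b < c"
  unfolding partner_def by (auto elim!: evenE oddE)

lemma partner_add_even: "even k \<Longrightarrow> partner (k + t) = k + partner t"
  unfolding partner_def by (cases "even t") (auto elim: oddE)

lemma bij_betw_partner: "even c \<Longrightarrow> bij_betw partner {..<c} {..<c}"
  by (rule bij_betw_byWitness[of _ partner]) (auto simp: partner_less)

lemma sum_Fmat:
  assumes "b < 2 ^ (r + 1) - 2"
  shows "(\<Sum>t<2 ^ (r + 1) - 2. f t * Fmat r t b) = f (partner b)"
proof -
  have even: "even (2 ^ (r + 1) - 2 :: nat)"
    by (simp add: dvd_diff_nat)
  have "Fmat r t b = (if t = partner b then 1 else 0)" if "t < 2 ^ (r + 1) - 2" for t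
  proof -
    have "t div 2 = b div 2 \<and> t mod 2 \<noteq> b mod 2 \<longleftrightarrow> t = partner b"
      unfolding partner_def by (auto elim!: evenE oddE) presburger+
    then show ?thesis unfolding Fmat_def using that assms by auto
  qed
  then have "(\<Sum>t<2 ^ (r + 1) - 2. f t * Fmat r t b) = (\<Sum>t<2 ^ (r + 1) - 2. if t = partner b then f t else 0)"
    by (intro sum.cong) auto
  then show ?thesis using partner_less[OF even assms] by simp
qed

lemma mem_Un_shift:
  fixes h :: nat
  assumes "L \<subseteq> {..<h}"
  shows "x \<in> L \<union> (\<lambda>y. y + h) ` R \<longleftrightarrow> (x < h \<and> x \<in> L) \<or> (h \<le> x \<and> x - h \<in> R)"
proof
  assume "(x < h \<and> x \<in> L) \<or> (h \<le> x \<and> x - h \<in> R)"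
  then show "x \<in> L \<union> (\<lambda>y. y + h) ` R"
    by (auto intro: image_eqI[of x _ "x - h"])
qed (use assms in auto)

lemma card_Un_shift:
  fixes h :: nat
  assumes "L \<subseteq> {..<h}" and "finite R"
  shows "card (L \<union> (\<lambda>y. y + h) ` R) = card L + card R"
proof -
  have "card (L \<union> (\<lambda>y. y + h) ` R) = card L + card ((\<lambda>y. y + h) ` R)"
    using assms by (intro card_Un_disjoint) (auto intro: finite_subset)
  then show ?thesis by (simp add: card_image)
qed

lemma Int_Un_shift:
  fixes h :: nat
  assumes "L \<subseteq> {..<h}" and "L' \<subseteq> {..<h}"
  shows "(L \<union> (\<lambda>y. y + h) ` R) \<inter> (L' \<union> (\<lambda>y. y + h) ` R')
    = (L \<inter> L') \<union> (\<lambda>y. y + h) ` (R \<inter> R')"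
  using assms by auto

lemma diff_Un_shift:
  fixes h :: nat
  assumes "L \<subseteq> {..<h}"
  shows "{..<2 * h} - (L \<union> (\<lambda>y. y + h) ` R) = ({..<h} - L) \<union> (\<lambda>y. y + h) ` ({..<h} - R)"
proof (rule set_eqI)
  fix x
  have "{..<h} - L \<subseteq> {..<h}" by auto
  from mem_Un_shift[OF this] mem_Un_shift[OF assms]
  show "x \<in> {..<2 * h} - (L \<union> (\<lambda>y. y + h) ` R) \<longleftrightarrow> x \<in> ({..<h} - L) \<union> (\<lambda>y. y + h) ` ({..<h} - R)"
    by auto
qed

lemma step_index_cases:
  fixes b c :: nat
  assumes "b < 2 + 2 * c"
  obtains (i0) "b = 0" | (i1) "b = 1"
    | (ii) t where "b = 2 + t" "t < c" | (iii) t where "b = 2 + c + t" "t < c"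
proof -
  consider "b = 0" | "b = 1" | "2 \<le> b \<and> b < 2 + c" | "2 + c \<le> b" by linarith
  then show ?thesis
  proof cases
    case 3 then show ?thesis using that(3)[of "b - 2"] by auto
  next
    case 4 then show ?thesis using that(4)[of "b - 2 - c"] assms by auto
  qed (use that in auto)
qed

lemma sum_step_index:
  "(\<Sum>b<2 + 2 * (c::nat). f b) = f 0 + f 1 + (\<Sum>t<c. f (2 + t)) + (\<Sum>t<c. f (2 + c + t))"
proof -
  have split: "(\<Sum>b<n + k. f b) = (\<Sum>b<n. f b) + (\<Sum>t<k. f (n + t))" for n k
    by (induction k) (auto simp: add.assoc)
  have "2 + 2 * c = (2 + c) + c" by simp
  then have "(\<Sum>b<2 + 2 * c. f b) = (\<Sum>b<2. f b) + (\<Sum>t<c. f (2 + t)) + (\<Sum>t<c. f (2 + c + t))"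
    by (simp only: split)
  then show ?thesis by (simp add: numeral_2_eq_2)
qed

text \<open>Column \<open>b\<close> of \<open>S\<^sub>r\<^sub>+\<^sub>1\<close> restricted to the rows below \<open>h = 2\<^sup>r\<close> and to the remaining
  rows (shifted down by \<open>h\<close>), given the columns \<open>M\<close> of \<open>S\<^sub>r\<close>: columns \<open>0, 1\<close> come from B(i),
  columns \<open>2 + t\<close> from B(ii) and columns \<open>2 + c + t\<close> from B(iii).\<close>
definition step_lower :: "nat \<Rightarrow> nat \<Rightarrow> (nat \<Rightarrow> nat set) \<Rightarrow> nat \<Rightarrow> nat set" where
  "step_lower c h M b = (if b = 0 then {..<h} else if b = 1 then {} else if b < 2 + c then M (b - 2)
     else M (b - 2 - c))"

definition step_upper :: "nat \<Rightarrow> nat \<Rightarrow> (nat \<Rightarrow> nat set) \<Rightarrow> nat \<Rightarrow> nat set" where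
  "step_upper c h M b = (if b = 0 then {} else if b = 1 then {..<h} else if b < 2 + c then M (b - 2)
     else M (partner (b - 2 - c)))"

locale block_family =
  fixes c h :: nat and M :: "nat \<Rightarrow> nat set"
  assumes even_c: "even c"
    and M_subset: "t < c \<Longrightarrow> M t \<subseteq> {..<h}"
    and card_M: "t < c \<Longrightarrow> 2 * card (M t) = h"
    and M_partner: "t < c \<Longrightarrow> M (partner t) = {..<h} - M t"
    and card_M_Int: "t < c \<Longrightarrow> t' < c \<Longrightarrow> t \<noteq> t' \<Longrightarrow> 4 * card (M t \<inter> M t') \<le> h"
    and count_M: "a < h \<Longrightarrow> (\<Sum>t<c. of_bool (a \<in> M t) :: nat) = h - 1"
begin

abbreviation lower :: "nat \<Rightarrow> nat set" where "lower \<equiv> step_lower c h M"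

abbreviation upper :: "nat \<Rightarrow> nat set" where "upper \<equiv> step_upper c h M"

text \<open>Stated for \<open>Suc (Suc t)\<close>, the simp normal form of \<open>2 + t\<close>.\<close>
lemma lower_simps [simp]:
  "lower 0 = {..<h}" "lower (Suc 0) = {}" "t < c \<Longrightarrow> lower (Suc (Suc t)) = M t"
  "t < c \<Longrightarrow> lower (Suc (Suc (c + t))) = M t"
  unfolding step_lower_def by auto

lemma upper_simps [simp]:
  "upper 0 = {}" "upper (Suc 0) = {..<h}" "t < c \<Longrightarrow> upper (Suc (Suc t)) = M t"
  "t < c \<Longrightarrow> upper (Suc (Suc (c + t))) = M (partner t)"
  unfolding step_upper_def by auto

lemma partner_less_c: "t < c \<Longrightarrow> partner t < c"
  using partner_less[OF even_c] .

lemma lower_subset: "b < 2 + 2 * c \<Longrightarrow> lower b \<subseteq> {..<h}"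
  by (erule step_index_cases) (simp_all add: M_subset)

lemma upper_subset: "b < 2 + 2 * c \<Longrightarrow> upper b \<subseteq> {..<h}"
  by (erule step_index_cases) (simp_all add: M_subset partner_less_c)

lemma card_lower_add_upper:
  assumes "b < 2 + 2 * c"
  shows "card (lower b) + card (upper b) = h"
  using assms
proof (cases rule: step_index_cases)
  case (ii t)
  then show ?thesis using card_M[of t] by simp
next
  case (iii t)
  then show ?thesis using card_M[of t] card_M[OF partner_less_c, of t] by simp
qed simp_all

lemma partner_step:
  assumes "b < 2 + 2 * c"
  shows "partner b < 2 + 2 * c" "lower (partner b) = {..<h} - lower b"
    "upper (partner b) = {..<h} - upper b"
proof -
  have "even (2 + 2 * c)" using even_c by auto
  then show "partner b < 2 + 2 * c" using partner_less assms by blast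
  from assms have "lower (partner b) = {..<h} - lower b \<and> upper (partner b) = {..<h} - upper b"
  proof (cases rule: step_index_cases)
    case (ii t)
    then have "partner b = 2 + partner t" using partner_add_even[of 2 t] by simp
    then show ?thesis using ii partner_less_c M_partner by simp
  next
    case (iii t)
    then have "partner b = 2 + c + partner t" using partner_add_even[of "2 + c" t] even_c by simp
    moreover have "{..<h} - ({..<h} - M t) = M t" using M_subset[OF \<open>t < c\<close>] by auto
    ultimately show ?thesis using iii partner_less_c M_partner by simp
  qed (simp_all add: partner_def)
  then show "lower (partner b) = {..<h} - lower b" "upper (partner b) = {..<h} - upper b"
    by blast+
qed

lemma four_card_M: "t < c \<Longrightarrow> 4 * card (M t) = 2 * h"
  using card_M by fastforce

lemma card_Int_add_card_Int_partner:
  assumes "t < c" "t' < c"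
  shows "card (M t \<inter> M t') + card (M t \<inter> M (partner t')) = card (M t)"
proof -
  have "M t \<inter> M (partner t') = M t - M t'"
    using M_partner[OF assms(2)] M_subset[OF assms(1)] by auto
  then show ?thesis
    using card_Int_Diff[of "M t" "M t'"] M_subset[OF assms(1)] finite_subset by fastforce
qed

lemma card_Int_step_less:
  assumes "b < b'" "b' < 2 + 2 * c"
  shows "4 * (card (lower b \<inter> lower b') + card (upper b \<inter> upper b')) \<le> 2 * h"
proof -
  note simps = Int_absorb1 Int_absorb2 M_subset partner_less_c four_card_M
  have "b < 2 + 2 * c" using assms by simp
  then show ?thesis
  proof (cases rule: step_index_cases)
    case i0
    from assms(2) show ?thesis
      by (cases rule: step_index_cases) (use i0 assms(1) in \<open>simp_all add: simps\<close>)
  next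
    case i1
    from assms(2) show ?thesis
      by (cases rule: step_index_cases) (use i1 assms(1) in \<open>simp_all add: simps\<close>)
  next
    case (ii t)
    from assms(2) show ?thesis
    proof (cases rule: step_index_cases)
      case (ii t')
      then show ?thesis
        using \<open>b = 2 + t\<close> \<open>t < c\<close> assms(1) card_M_Int[of t t'] by simp
    next
      case (iii t')
      then show ?thesis
        using \<open>b = 2 + t\<close> \<open>t < c\<close> card_Int_add_card_Int_partner[of t t'] four_card_M[of t]
        by simp
    qed (use ii assms(1) in simp_all)
  next
    case (iii t)
    from assms(2) show ?thesis
    proof (cases rule: step_index_cases)
      case (iii t')
      moreover have "partner t \<noteq> partner t'"
        using iii \<open>b = 2 + c + t\<close> assms(1) by (metis less_irrefl partner_partner)
      ultimately show ?thesis
        using \<open>b = 2 + c + t\<close> \<open>t < c\<close> assms(1) partner_less_c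
          card_M_Int[of t t'] card_M_Int[of "partner t" "partner t'"] by simp
    qed (use iii assms(1) in simp_all)
  qed
qed

lemma card_Int_step:
  assumes "b < 2 + 2 * c" "b' < 2 + 2 * c" "b \<noteq> b'"
  shows "4 * (card (lower b \<inter> lower b') + card (upper b \<inter> upper b')) \<le> 2 * h"
  using assms card_Int_step_less[of b b'] card_Int_step_less[of b' b]
  by (cases "b < b'") (simp_all add: Int_commute)

lemma count_lower:
  assumes "a < h"
  shows "(\<Sum>b<2 + 2 * c. of_bool (a \<in> lower b) :: nat) = 2 * h - 1"
proof -
  have "(\<Sum>t<c. of_bool (a \<in> lower (2 + t)) :: nat) = (\<Sum>t<c. of_bool (a \<in> M t))"
    "(\<Sum>t<c. of_bool (a \<in> lower (2 + c + t)) :: nat) = (\<Sum>t<c. of_bool (a \<in> M t))"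
    by (rule sum.cong; simp)+
  then show ?thesis
    unfolding sum_step_index using assms count_M[OF assms] by simp
qed

lemma count_upper:
  assumes "a < h"
  shows "(\<Sum>b<2 + 2 * c. of_bool (a \<in> upper b) :: nat) = 2 * h - 1"
proof -
  have "(\<Sum>t<c. of_bool (a \<in> M (partner t)) :: nat) = (\<Sum>t<c. of_bool (a \<in> M t))"
    using sum.reindex_bij_betw[OF bij_betw_partner[OF even_c], of "\<lambda>t. of_bool (a \<in> M t)"] .
  moreover have "(\<Sum>t<c. of_bool (a \<in> upper (2 + t)) :: nat) = (\<Sum>t<c. of_bool (a \<in> M t))"
    "(\<Sum>t<c. of_bool (a \<in> upper (2 + c + t)) :: nat) = (\<Sum>t<c. of_bool (a \<in> M (partner t)))"
    by (rule sum.cong; simp)+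
  ultimately show ?thesis
    unfolding sum_step_index using assms count_M[OF assms] by simp
qed

lemma block_family_step:
  assumes M': "\<And>b. b < 2 + 2 * c \<Longrightarrow> M' b = lower b \<union> (\<lambda>y. y + h) ` upper b"
  shows "block_family (2 + 2 * c) (2 * h) M'"
proof
  show "even (2 + 2 * c)" by simp
next
  fix b assume b: "b < 2 + 2 * c"
  show "M' b \<subseteq> {..<2 * h}"
    using M'[OF b] lower_subset[OF b] upper_subset[OF b] by auto
  have "card (M' b) = h"
    using M'[OF b] card_Un_shift[OF lower_subset[OF b] finite_subset[OF upper_subset[OF b]]]
      card_lower_add_upper[OF b] by simp
  then show "2 * card (M' b) = 2 * h" by simp
  show "M' (partner b) = {..<2 * h} - M' b"
    using M' b partner_step[OF b] diff_Un_shift[OF lower_subset[OF b]] by simp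
next
  fix b b' assume b: "b < 2 + 2 * c" "b' < 2 + 2 * c" "b \<noteq> b'"
  have "M' b \<inter> M' b' = (lower b \<inter> lower b') \<union> (\<lambda>y. y + h) ` (upper b \<inter> upper b')"
    using M' b Int_Un_shift[OF lower_subset[OF b(1)] lower_subset[OF b(2)]] by simp
  moreover have "card \<dots> = card (lower b \<inter> lower b') + card (upper b \<inter> upper b')"
    using lower_subset[OF b(1)] finite_subset[OF upper_subset[OF b(1)] finite_lessThan]
    by (intro card_Un_shift) auto
  ultimately have "card (M' b \<inter> M' b') = card (lower b \<inter> lower b') + card (upper b \<inter> upper b')"
    by simp
  then show "4 * card (M' b \<inter> M' b') \<le> 2 * h"
    using card_Int_step[OF b] by simp
next
  fix a assume a: "a < 2 * h"
  have mem: "a \<in> M' b \<longleftrightarrow> (if a < h then a \<in> lower b else a - h \<in> upper b)"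
    if "b < 2 + 2 * c" for b
    using M'[OF that] mem_Un_shift[OF lower_subset[OF that]] by simp
  show "(\<Sum>b<2 + 2 * c. of_bool (a \<in> M' b) :: nat) = 2 * h - 1"
  proof (cases "a < h")
    case True
    have "(\<Sum>b<2 + 2 * c. of_bool (a \<in> M' b) :: nat) = (\<Sum>b<2 + 2 * c. of_bool (a \<in> lower b))"
      by (rule sum.cong) (use mem True in auto)
    then show ?thesis using count_lower[OF True] by simp
  next
    case False
    have "(\<Sum>b<2 + 2 * c. of_bool (a \<in> M' b) :: nat) = (\<Sum>b<2 + 2 * c. of_bool (a - h \<in> upper b))"
      by (rule sum.cong) (use mem False in auto)
    then show ?thesis using count_upper[of "a - h"] a False by simp
  qed
qed

end

lemma Sblock_subset: "Sblock r b \<subseteq> {..<2 ^ r}"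
  unfolding Sblock_def by auto

lemma Sblock_Suc:
  fixes r b :: nat
  defines "c \<equiv> 2 ^ (r + 1) - 2" and "h \<equiv> 2 ^ r"
  assumes r: "1 \<le> r" and b: "b < 2 + 2 * c"
  shows "Sblock (Suc r) b
    = step_lower c h (Sblock r) b \<union> (\<lambda>y. y + h) ` step_upper c h (Sblock r) b"
proof -
  have "step_lower c h (Sblock r) b \<subseteq> {..<h}"
    using Sblock_subset unfolding step_lower_def h_def by auto
  note mem = mem_Un_shift[OF this]
  have "x \<in> Sblock (Suc r) b \<longleftrightarrow>
      (x < h \<and> x \<in> step_lower c h (Sblock r) b) \<or>
      (h \<le> x \<and> x - h \<in> step_upper c h (Sblock r) b)" for x
  proof -
    have "x \<in> Sblock (Suc r) b \<longleftrightarrow> x < 2 * h \<and> S_step r (Smat r) x b = 1"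
      unfolding Sblock_def h_def using r by simp
    then show ?thesis
      using b sum_Fmat[of _ r, simplified] unfolding S_step_def Let_def Sblock_def
        step_lower_def step_upper_def c_def h_def
      by auto
  qed
  then show ?thesis using mem by blast
qed

lemma block_family_Sblock_1: "block_family 2 2 (Sblock 1)"
proof -
  have S1: "Sblock (Suc 0) b = (if b < 2 then {b} else {})" for b
    by (auto simp: Sblock_def)
  have sum2: "(\<Sum>t<2. f t) = f 0 + f 1" for f :: "nat \<Rightarrow> nat"
    by (simp add: numeral_2_eq_2)
  show ?thesis
    by unfold_locales (auto simp: S1 partner_def sum2 less_2_cases_iff One_nat_def)
qed

lemma block_family_Sblock: "1 \<le> r \<Longrightarrow> block_family (2 ^ (r + 1) - 2) (2 ^ r) (Sblock r)"
proof (induction r rule: nat_induct_at_least)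
  case base
  then show ?case using block_family_Sblock_1 by simp
next
  case (Suc r)
  interpret block_family "2 ^ (r + 1) - 2" "2 ^ r" "Sblock r" by (rule Suc.IH)
  have "block_family (2 + 2 * (2 ^ (r + 1) - 2)) (2 * 2 ^ r) (Sblock (Suc r))"
    using Suc.hyps by (intro block_family_step Sblock_Suc)
  moreover have "2 + 2 * (2 ^ (r + 1) - 2) = 2 ^ (Suc r + 1) - (2::nat)"
    using one_le_power[of "2::nat" r] by (simp, arith)
  ultimately show ?case by simp
qed

section \<open>Fusion frames from blocks of coordinate projections\<close>

lemma sum_over_covering_blocks:
  fixes g :: "nat \<Rightarrow> real"
  assumes C: "finite C" and J: "\<And>b. b \<in> C \<Longrightarrow> J b \<subseteq> {..<m}"
    and cover: "\<And>a. a < m \<Longrightarrow> card {b\<in>C. a \<in> J b} = q"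
  shows "(\<Sum>b\<in>C. \<Sum>j\<in>J b. g j) = q * (\<Sum>j<m. g j)"
proof -
  have "(\<Sum>b\<in>C. \<Sum>j\<in>J b. g j) = (\<Sum>b\<in>C. \<Sum>j<m. g j * of_bool (j \<in> J b))"
    using J by (intro sum.cong[OF refl]) (simp add: Int_absorb1)
  also have "\<dots> = (\<Sum>j<m. g j * (\<Sum>b\<in>C. of_bool (j \<in> J b)))"
    by (subst sum.swap) (simp add: sum_distrib_left)
  also have "\<dots> = (\<Sum>j<m. g j * q)"
    using C cover by (intro sum.cong refl) (simp add: Collect_conj_eq Int_commute)
  finally show ?thesis by (simp add: sum_distrib_left mult.commute)
qed

lemma tight_fusion_frame_coord_proj:
  assumes K: "finite K" "K \<noteq> {}" and B: "\<And>k. k \<in> K \<Longrightarrow> onb Fs m (B k)"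
    and C: "finite C" and J: "\<And>b. b \<in> C \<Longrightarrow> J b \<subseteq> {..<m}" "\<And>b. b \<in> C \<Longrightarrow> card (J b) = l"
    and cover: "\<And>a. a < m \<Longrightarrow> card {b\<in>C. a \<in> J b} = q" and q: "0 < q"
  shows "tight_fusion_frame Fs m l (K \<times> C) (\<lambda>(k, b). coord_proj (B k) (J b))"
  unfolding tight_fusion_frame_def
proof (intro conjI ballI exI[of _ "real (card K * q)"] allI impI)
  show "finite (K \<times> C)" using K C by simp
  show "0 < real (card K * q)" using K q by (simp add: card_gt_0_iff)
next
  fix z assume "z \<in> K \<times> C"
  then show "is_proj Fs m l ((\<lambda>(k, b). coord_proj (B k) (J b)) z)"
    using is_proj_coord_proj[OF B J(1)] J(2) by auto
next
  fix x assume "fvec Fs m x"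
  then have x: "\<forall>i\<ge>m. x i = 0" unfolding fvec_def by blast
  have "(\<Sum>z\<in>K \<times> C. vnorm2 m (mat_vec m ((\<lambda>(k, b). coord_proj (B k) (J b)) z) x))
      = (\<Sum>k\<in>K. \<Sum>b\<in>C. vnorm2 m (mat_vec m (coord_proj (B k) (J b)) x))"
    by (simp add: sum.cartesian_product split_def)
  also have "\<dots> = (\<Sum>k\<in>K. \<Sum>b\<in>C. \<Sum>j\<in>J b. (cmod (cinner m x (B k j)))\<^sup>2)"
    by (intro sum.cong refl) (simp add: vnorm2_coord_proj[OF B J(1)])
  also have "\<dots> = (\<Sum>k\<in>K. q * vnorm2 m x)"
    using sum_over_covering_blocks[OF C J(1) cover] onb_parseval[OF B x] by simp
  also have "\<dots> = real (card K * q) * vnorm2 m x"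
    by simp
  finally show "(\<Sum>z\<in>K \<times> C. vnorm2 m (mat_vec m ((\<lambda>(k, b). coord_proj (B k) (J b)) z) x))
      = real (card K * q) * vnorm2 m x" .
qed

lemma fusion_frame_if_tight: "tight_fusion_frame Fs m l I P \<Longrightarrow> fusion_frame Fs m l I P"
  unfolding tight_fusion_frame_def fusion_frame_def by fastforce

lemma trprod_coord_proj_same_basis:
  assumes "onb Fs m b" and "J \<subseteq> {..<m}" and "J' \<subseteq> {..<m}"
  shows "trprod m (coord_proj b J) (coord_proj b J') = card (J \<inter> J')"
proof -
  have fin: "finite J" "finite J'"
    using assms(2,3) finite_subset by auto
  have "trprod m (coord_proj b J) (coord_proj b J') = (\<Sum>j\<in>J. \<Sum>j'\<in>J'. if j = j' then 1 else 0)"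
    unfolding trprod_coord_proj using assms
    by (intro sum.cong refl) (auto simp: onb_orthonormal[OF assms(1)] subset_iff)
  also have "\<dots> = (\<Sum>j\<in>J. if j \<in> J' then 1 else 0)"
    using fin by simp
  also have "\<dots> = card (J \<inter> J')"
    using fin by (simp add: sum.inter_filter[symmetric] Int_def)
  finally show ?thesis .
qed

lemma trprod_coord_proj_unbiased:
  assumes "mutually_unbiased m b b'" and "J \<subseteq> {..<m}" and "J' \<subseteq> {..<m}"
  shows "trprod m (coord_proj b J) (coord_proj b' J') = card J * card J' / m"
  unfolding trprod_coord_proj using assms
  by (simp add: mutually_unbiased_def subset_iff cong: sum.cong)

lemma finite_correlations:
  "finite I \<Longrightarrow> finite {trprod m (P j) (P k) | j k. j \<in> I \<and> k \<in> I \<and> j \<noteq> k}"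
  by (rule finite_subset[of _ "(\<lambda>(j, k). trprod m (P j) (P k)) ` (I \<times> I)"]) auto

lemma trprod_le_max_corr:
  "finite I \<Longrightarrow> j \<in> I \<Longrightarrow> k \<in> I \<Longrightarrow> j \<noteq> k \<Longrightarrow> trprod m (P j) (P k) \<le> max_corr m I P"
  unfolding max_corr_def by (rule Max_ge[OF finite_correlations]) auto

lemma max_corr_eqI:
  assumes "finite I" and le: "\<And>j k. j \<in> I \<Longrightarrow> k \<in> I \<Longrightarrow> j \<noteq> k \<Longrightarrow> trprod m (P j) (P k) \<le> \<mu>"
    and attained: "j \<in> I" "k \<in> I" "j \<noteq> k" "trprod m (P j) (P k) = \<mu>"
  shows "max_corr m I P = \<mu>"
  unfolding max_corr_def
  by (rule Max_eqI[OF finite_correlations[OF \<open>finite I\<close>]]) (use le attained in blast)+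

lemma max_corr_coord_proj:
  assumes K: "finite K" "2 \<le> card K" and B: "\<And>k. k \<in> K \<Longrightarrow> onb Fs m (B k)"
    and unbiased: "\<And>k k'. k \<in> K \<Longrightarrow> k' \<in> K \<Longrightarrow> k \<noteq> k' \<Longrightarrow> mutually_unbiased m (B k) (B k')"
    and C: "finite C" "C \<noteq> {}"
    and J: "\<And>b. b \<in> C \<Longrightarrow> J b \<subseteq> {..<m}" "\<And>b. b \<in> C \<Longrightarrow> card (J b) = l"
    and overlap: "\<And>b b'. b \<in> C \<Longrightarrow> b' \<in> C \<Longrightarrow> b \<noteq> b' \<Longrightarrow> real (card (J b \<inter> J b')) \<le> real l ^ 2 / real m"
  shows "max_corr m (K \<times> C) (\<lambda>(k, b). coord_proj (B k) (J b)) = real l ^ 2 / real m"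
proof -
  have cross: "trprod m (coord_proj (B k) (J b)) (coord_proj (B k') (J b')) = real l ^ 2 / real m"
    if "k \<in> K" "k' \<in> K" "k \<noteq> k'" "b \<in> C" "b' \<in> C" for k k' b b'
    using that by (simp add: trprod_coord_proj_unbiased unbiased J power2_eq_square)
  obtain k k' where k: "k \<in> K" "k' \<in> K" "k \<noteq> k'"
    using K by (metis card_2_iff' card_le_Suc0_iff_eq not_less_eq_eq numeral_2_eq_2)
  obtain b where "b \<in> C" using C by blast
  show ?thesis
  proof (rule max_corr_eqI[where j = "(k, b)" and k = "(k', b)"])
    fix z z' assume z: "z \<in> K \<times> C" "z' \<in> K \<times> C" "z \<noteq> z'"
    then obtain k b k' b' where zz: "z = (k, b)" "z' = (k', b')" "k \<in> K" "k' \<in> K" "b \<in> C" "b' \<in> C"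
      by auto
    show "trprod m ((\<lambda>(k, b). coord_proj (B k) (J b)) z) ((\<lambda>(k, b). coord_proj (B k) (J b)) z')
        \<le> real l ^ 2 / real m"
    proof (cases "k = k'")
      case True
      then show ?thesis
        using zz z(3) overlap[of b b'] trprod_coord_proj_same_basis[OF B J(1) J(1)] by auto
    qed (use zz cross in simp)
  qed (use K C \<open>b \<in> C\<close> k cross in simp_all)
qed

lemma grassmannian_if_orthoplex_bound_attained:
  assumes m: "0 < m" and frame: "fusion_frame (fld isreal) m l I P"
    and n: "dF isreal m + 1 < card I" and attained: "max_corr m I P = real l ^ 2 / real m"
  shows "grassmannian (fld isreal) m l I P"
  unfolding grassmannian_def
proof (intro conjI allI impI frame)
  fix Q assume "fusion_frame (fld isreal) m l {..<card I} Q"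
  then have "\<And>j. j < card I \<Longrightarrow> is_proj (fld isreal) m l (Q j)"
    unfolding fusion_frame_def by simp
  then obtain j k where "j < card I" "k < card I" "j \<noteq> k"
    and "real l ^ 2 / real m \<le> trprod m (Q j) (Q k)"
    using orthoplex_bound[OF m n] by blast
  then show "max_corr m I P \<le> max_corr m {..<card I} Q"
    using attained trprod_le_max_corr[of "{..<card I}" j k m Q] by simp
qed

lemma kF_mult_eq_two_dF: "even m \<Longrightarrow> kF isreal m * (2 * m - 2) = 2 * dF isreal m"
  by (auto simp: kF_def dF_def power2_eq_square algebra_simps elim!: evenE)

lemma one_less_dF: "2 \<le> m \<Longrightarrow> 1 < dF isreal m"
proof -
  assume "2 \<le> m"
  then have "4 \<le> (m + 2) * (m - 1)" "4 \<le> m\<^sup>2"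
    using mult_le_mono[of 4 "m + 2" 1 "m - 1"] power_mono[of 2 m 2] by auto
  then show ?thesis
    unfolding dF_def by auto
qed

theorem tight_maximal_orthoplectic_coord_proj:
  assumes mub: "maximal_mub isreal m K B" and m: "m = 2 * l" "0 < l"
    and J: "\<And>b. b < 2 * m - 2 \<Longrightarrow> J b \<subseteq> {..<m}" "\<And>b. b < 2 * m - 2 \<Longrightarrow> card (J b) = l"
    and cover: "\<And>a. a < m \<Longrightarrow> card {b\<in>{..<2 * m - 2}. a \<in> J b} = m - 1"
    and overlap: "\<And>b b'. b < 2 * m - 2 \<Longrightarrow> b' < 2 * m - 2 \<Longrightarrow> b \<noteq> b' \<Longrightarrow> 4 * card (J b \<inter> J b') \<le> m"
  shows "tight_fusion_frame (fld isreal) m l (K \<times> {..<2 * m - 2}) (\<lambda>(k, b). coord_proj (B k) (J b))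
    \<and> maximal_orthoplectic isreal m l (K \<times> {..<2 * m - 2}) (\<lambda>(k, b). coord_proj (B k) (J b))"
    (is "tight_fusion_frame _ _ _ ?I ?P \<and> _")
proof
  have B: "\<And>k. k \<in> K \<Longrightarrow> onb (fld isreal) m (B k)" "finite K" "card K = kF isreal m"
    and unbiased: "\<And>k k'. k \<in> K \<Longrightarrow> k' \<in> K \<Longrightarrow> k \<noteq> k' \<Longrightarrow> mutually_unbiased m (B k) (B k')"
    using mub unfolding maximal_mub_def by auto
  have K: "2 \<le> card K" "K \<noteq> {}"
    using B(2,3) m unfolding kF_def by (auto split: if_splits)
  have C: "finite {..<2 * m - 2}" "{..<2 * m - 2} \<noteq> {}"
    using m by (auto simp: lessThan_empty_iff)
  have J': "\<And>b. b \<in> {..<2 * m - 2} \<Longrightarrow> J b \<subseteq> {..<m}"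
    "\<And>b. b \<in> {..<2 * m - 2} \<Longrightarrow> card (J b) = l"
    using J by auto
  show tight: "tight_fusion_frame (fld isreal) m l ?I ?P"
    using tight_fusion_frame_coord_proj[OF B(2) K(2) B(1) C(1) J' cover] m by simp
  have "real l ^ 2 / real m = real l / 2"
    using m by (simp add: power2_eq_square)
  then have overlap': "real (card (J b \<inter> J b')) \<le> real l ^ 2 / real m"
    if "b \<in> {..<2 * m - 2}" "b' \<in> {..<2 * m - 2}" "b \<noteq> b'" for b b'
    using overlap[of b b'] that m(1) by simp
  have "max_corr m ?I ?P = real l ^ 2 / real m"
    using max_corr_coord_proj[OF B(2) K(1) B(1) unbiased C J' overlap'] .
  moreover have "card ?I = 2 * dF isreal m"
    using B(2,3) m kF_mult_eq_two_dF[of m isreal] by (simp add: card_cartesian_product)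
  moreover have "1 < dF isreal m"
    using one_less_dF m by simp
  ultimately show "maximal_orthoplectic isreal m l ?I ?P"
    unfolding maximal_orthoplectic_def orthoplex_bound_achieving_def
    using grassmannian_if_orthoplex_bound_attained[OF _ fusion_frame_if_tight[OF tight]] m by simp
qed

theorem theorem4p5:
  fixes isreal :: bool and r :: nat and K :: "'k set"
    and B :: "'k \<Rightarrow> nat \<Rightarrow> nat \<Rightarrow> complex"
  assumes "r > 0"
    and "isreal \<longrightarrow> even r"
    and "maximal_mub isreal (2^r) K B"
  shows "\<exists>l. tight_fusion_frame (fld isreal) (2^r) l (K \<times> {..<2^(r+1) - 2})
               (\<lambda>(k, b). coord_proj (B k) (Sblock r b))
           \<and> maximal_orthoplectic isreal (2^r) l (K \<times> {..<2^(r+1) - 2})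
               (\<lambda>(k, b). coord_proj (B k) (Sblock r b))"
proof -
  interpret block_family "2 ^ (r + 1) - 2" "2 ^ r" "Sblock r"
    using block_family_Sblock assms(1) by simp
  define l :: nat where "l = 2 ^ (r - 1)"
  have m: "2 ^ r = 2 * l" "0 < l" and c: "2 ^ (r + 1) - 2 = 2 * 2 ^ r - (2::nat)"
    unfolding l_def using assms(1) by (cases r) simp_all
  have cover: "card {b\<in>{..<2 * 2 ^ r - 2}. a \<in> Sblock r b} = 2 ^ r - 1" if "a < 2 ^ r" for a
    using count_M[OF that] unfolding c by (simp add: Collect_conj_eq Int_commute lessThan_def)
  have "tight_fusion_frame (fld isreal) (2 ^ r) l (K \<times> {..<2 * 2 ^ r - 2}) (\<lambda>(k, b). coord_proj (B k) (Sblock r b))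
    \<and> maximal_orthoplectic isreal (2 ^ r) l (K \<times> {..<2 * 2 ^ r - 2}) (\<lambda>(k, b). coord_proj (B k) (Sblock r b))"
  proof (rule tight_maximal_orthoplectic_coord_proj[OF assms(3) m _ _ cover])
    fix b b' :: nat assume b: "b < 2 * 2 ^ r - 2"
    then show "Sblock r b \<subseteq> {..<2 ^ r}" "card (Sblock r b) = l"
      using M_subset[of b] card_M[of b] unfolding c m(1) by simp_all
    assume "b' < 2 * 2 ^ r - 2" "b \<noteq> b'"
    then show "4 * card (Sblock r b \<inter> Sblock r b') \<le> 2 ^ r"
      using card_M_Int[of b b'] b unfolding c by simp
  qed
  then show ?thesis unfolding c by blast
qed

end
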